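(* Under the standing assumptions below, the operator $P:Y\to Y$ satisfies $P^2=I$.
   Context: $X$ is one of $\ell^p$ ($1\le p\le\infty$), $c$, $c_0$. Standing assumptions: $(a_n)$ strictly decreasing positive reals, $a_n\to0$; $b=(b_n)\in X$ with $b_n>0$ for all $n$; $\pi_n:=2\prod_{m\ge1,\,m\ne n}\frac{1+a_m/a_n}{1-a_m/a_n}$ and $\pi\in\ell^\infty$; $\phi_{ij}:=\frac{b_i/b_j}{1+a_i/a_j}$ satisfies $\phi_{ij}\le C\mu^{|i-j|}$ for some $C>0$, $\mu\in(0,1)$. $Y:=\{(y_n)\mid(b_ny_n)\in X\}$ with $\|y\|_Y:=\|(b_ny_n)\|_X$. $P:Y\to Y$ is $(Py)_n:=\sum_{m=1}^\infty\frac{a_m\pi_my_m}{a_n+a_m}$ (matrix entries $P_{ij}=\frac{a_j\pi_j}{a_i+a_j}$); it is a bounded operator on $Y$. *)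

theory Defs
  imports "HOL-Analysis.Analysis"
begin

text \<open>The ambient sequence space X: one of l^p (1 <= p < inf), l^inf, c, c_0.
  Sequences are indexed from 0 (the paper indexes from 1; this is a harmless shift).\<close>

datatype seqspace = Lp real | Linf | Conv | Conv0

fun valid_seqspace :: "seqspace \<Rightarrow> bool" where
  "valid_seqspace (Lp p) = (1 \<le> p)"
| "valid_seqspace Linf = True"
| "valid_seqspace Conv = True"
| "valid_seqspace Conv0 = True"

fun in_seqspace :: "seqspace \<Rightarrow> (nat \<Rightarrow> real) \<Rightarrow> bool" where
  "in_seqspace (Lp p) x = summable (\<lambda>n. \<bar>x n\<bar> powr p)"
| "in_seqspace Linf x = Bseq x"
| "in_seqspace Conv x = convergent x"
| "in_seqspace Conv0 x = (x \<longlonglongrightarrow> 0)"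

definition pi_factor :: "(nat \<Rightarrow> real) \<Rightarrow> nat \<Rightarrow> nat \<Rightarrow> real" where
  "pi_factor a n m = (if m = n then 1 else (1 + a m / a n) / (1 - a m / a n))"

definition pi_seq :: "(nat \<Rightarrow> real) \<Rightarrow> nat \<Rightarrow> real" where
  "pi_seq a n = 2 * (\<Prod>m. pi_factor a n m)"

definition phi :: "(nat \<Rightarrow> real) \<Rightarrow> (nat \<Rightarrow> real) \<Rightarrow> nat \<Rightarrow> nat \<Rightarrow> real" where
  "phi a b i j = (b i / b j) / (1 + a i / a j)"

definition in_Y :: "seqspace \<Rightarrow> (nat \<Rightarrow> real) \<Rightarrow> (nat \<Rightarrow> real) \<Rightarrow> bool" where
  "in_Y X b y = in_seqspace X (\<lambda>n. b n * y n)"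

definition P_op :: "(nat \<Rightarrow> real) \<Rightarrow> (nat \<Rightarrow> real) \<Rightarrow> nat \<Rightarrow> real" where
  "P_op a y n = (\<Sum>m. a m * pi_seq a m * y m / (a n + a m))"

end

theory Submission
  imports Defs
begin

(* For finitely many distinct positive a_j the rational function
     R_S(z) = prod_{j in S} (z + a_j) / (z - a_j)
   has the partial fraction expansion R_S(z) = 1 + sum_{m in S} a_m pi^S_m / (z - a_m), where pi^S_m
   is pi_m with the product truncated to S. Evaluating at the zero z = -a_n of R_S gives
   sum_m a_m pi^S_m / (a_n + a_m) = 1, and evaluating R_{S - {n}} at the same point gives
   sum_m a_m pi^S_m / (a_n + a_m)^2 = 1 / (a_n pi^S_n). Tannery's theorem carries both identities
   over from S = {0..N} to the infinite sums. Since 1/((a_n + a_m)(a_m + a_k)) is a multiple of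
   1/(a_n + a_m) - 1/(a_k + a_m) for k ~= n, they amount to sum_m P_nm P_mk = delta_nk.
   Finally, phi_ij <= C mu^|i-j| bounds |P_nm P_mk y_k| by a multiple of
   mu^(|n-m| + |m-k|) <= sqrt mu^|n-m| * sqrt mu^|n-k|, so the double series
   sum_{m,k} P_nm P_mk y_k converges absolutely and may be summed in either order. *)

definition pi_finite :: "(nat \<Rightarrow> 'a::field) \<Rightarrow> nat set \<Rightarrow> nat \<Rightarrow> 'a" where
  "pi_finite a S m = 2 * (\<Prod>j\<in>S - {m}. (a m + a j) / (a m - a j))"

definition cayley_prod :: "(nat \<Rightarrow> 'a::field) \<Rightarrow> nat set \<Rightarrow> 'a \<Rightarrow> 'a" where
  "cayley_prod a S z = (\<Prod>j\<in>S. (z + a j) / (z - a j))"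

lemma cayley_factor_mult_simple_fraction:
  fixes z t x c :: "'a::field"
  assumes "z \<noteq> t" "z \<noteq> x" "x \<noteq> t"
  shows "(z + t) / (z - t) * (c / (z - x)) = 2 * t / (z - t) * (c / (t - x)) + c * (x + t) / (x - t) / (z - x)"
  using assms by (simp add: divide_simps) (simp add: algebra_simps)

lemma cayley_prod_partial_fractions:
  fixes a :: "nat \<Rightarrow> 'a::field"
  assumes "finite S" "inj_on a S" "z \<notin> a ` S"
  shows "cayley_prod a S z = 1 + (\<Sum>m\<in>S. a m * pi_finite a S m / (z - a m))"
  using assms
proof (induction S arbitrary: z rule: finite_induct)
  case empty
  then show ?case by (simp add: cayley_prod_def)
next
  case (insert t F)
  let ?c = "\<lambda>m. a m * pi_finite a F m"
  have t: "a t \<notin> a ` F" "z \<noteq> a t" and inj: "inj_on a F" and z: "z \<notin> a ` F"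
    using insert.hyps insert.prems by auto
  have pi_t: "a t * pi_finite a (insert t F) t = 2 * a t * cayley_prod a F (a t)"
    using insert.hyps by (simp add: pi_finite_def cayley_prod_def)
  have pi_m: "a m * pi_finite a (insert t F) m = ?c m * (a m + a t) / (a m - a t)" if "m \<in> F" for m
  proof -
    have "insert t F - {m} = insert t (F - {m})" using insert.hyps that by auto
    then show ?thesis using insert.hyps that by (simp add: pi_finite_def)
  qed
  have "cayley_prod a (insert t F) z = (z + a t) / (z - a t) * (1 + (\<Sum>m\<in>F. ?c m / (z - a m)))"
    using insert by (simp add: cayley_prod_def)
  also have "\<dots> = (z + a t) / (z - a t) + (\<Sum>m\<in>F. (z + a t) / (z - a t) * (?c m / (z - a m)))"
    by (simp add: distrib_left sum_distrib_left)
  also have "\<dots> = 1 + 2 * a t / (z - a t)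
      + (\<Sum>m\<in>F. 2 * a t / (z - a t) * (?c m / (a t - a m)) + ?c m * (a m + a t) / (a m - a t) / (z - a m))"
  proof -
    have "(z + a t) / (z - a t) = 1 + 2 * a t / (z - a t)" using t by (simp add: field_simps)
    moreover have "(z + a t) / (z - a t) * (?c m / (z - a m))
        = 2 * a t / (z - a t) * (?c m / (a t - a m)) + ?c m * (a m + a t) / (a m - a t) / (z - a m)"
      if "m \<in> F" for m
    proof (rule cayley_factor_mult_simple_fraction)
      show "a m \<noteq> a t" "z \<noteq> a m" using t z that by (metis image_eqI)+
    qed (use t in auto)
    ultimately show ?thesis by simp
  qed
  also have "\<dots> = 1 + 2 * a t / (z - a t) * cayley_prod a F (a t)
      + (\<Sum>m\<in>F. ?c m * (a m + a t) / (a m - a t) / (z - a m))"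
    using insert.IH[OF inj t(1)] by (simp add: sum.distrib sum_distrib_left algebra_simps)
  also have "\<dots> = 1 + (\<Sum>m\<in>insert t F. a m * pi_finite a (insert t F) m / (z - a m))"
    using insert.hyps by (simp add: pi_t pi_m)
  finally show ?case .
qed

lemma uminus_notin_image_pos:
  fixes a :: "nat \<Rightarrow> real"
  assumes "\<And>j. j \<in> S \<Longrightarrow> a j > 0" "x > 0"
  shows "- x \<notin> a ` S"
proof
  assume "- x \<in> a ` S"
  then obtain j where "j \<in> S" "- x = a j" by blast
  with assms show False by (metis neg_0_less_iff_less not_less_iff_gr_or_eq)
qed

lemma sum_pi_finite_div_add:
  fixes a :: "nat \<Rightarrow> real"
  assumes S: "finite S" "inj_on a S" and pos: "\<And>j. j \<in> S \<Longrightarrow> a j > 0" and n: "n \<in> S"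
  shows "(\<Sum>m\<in>S. a m * pi_finite a S m / (a n + a m)) = 1"
proof -
  have "- a n \<notin> a ` S" using pos n by (intro uminus_notin_image_pos) auto
  from cayley_prod_partial_fractions[OF S this]
  have "cayley_prod a S (- a n) = 1 - (\<Sum>m\<in>S. a m * pi_finite a S m / (a n + a m))"
    by (simp add: sum_negf[symmetric] minus_divide_right)
  moreover have "cayley_prod a S (- a n) = 0"
    unfolding cayley_prod_def using S n by (auto intro!: bexI[of _ n])
  ultimately show ?thesis by simp
qed

lemma pi_finite_remove:
  fixes a :: "nat \<Rightarrow> real"
  assumes "finite S" "inj_on a S" "n \<in> S" "m \<in> S" "m \<noteq> n" "a m + a n \<noteq> 0"
  shows "pi_finite a (S - {n}) m = pi_finite a S m * (a m - a n) / (a m + a n)"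
proof -
  have "S - {m} = insert n (S - {n} - {m})" using assms by auto
  moreover have "a m - a n \<noteq> 0" using assms by (auto simp: inj_on_def)
  ultimately show ?thesis using assms by (simp add: pi_finite_def)
qed

lemma cayley_prod_remove_mult_pi_finite:
  fixes a :: "nat \<Rightarrow> real"
  assumes "finite S" "inj_on a S" "\<And>j. j \<in> S \<Longrightarrow> a j > 0" "n \<in> S"
  shows "cayley_prod a (S - {n}) (- a n) * pi_finite a S n = 2"
proof -
  have "cayley_prod a (S - {n}) (- a n) * pi_finite a S n
      = 2 * (\<Prod>j\<in>S - {n}. (- a n + a j) / (- a n - a j) * ((a n + a j) / (a n - a j)))"
    unfolding cayley_prod_def pi_finite_def prod.distrib by (simp only: mult.commute mult.left_commute)
  also have "\<dots> = 2 * (\<Prod>j\<in>S - {n}. 1)"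
  proof (intro arg_cong[where f = "(*) 2"] prod.cong refl)
    fix j assume j: "j \<in> S - {n}"
    have "a n - a j \<noteq> 0" using assms j by (auto simp: inj_on_def)
    moreover have "a n + a j > 0" using assms j by (simp add: add_pos_pos)
    ultimately show "(- a n + a j) / (- a n - a j) * ((a n + a j) / (a n - a j)) = 1"
      by (simp add: divide_simps) (simp add: algebra_simps)
  qed
  finally show ?thesis by simp
qed

lemma sum_pi_finite_div_add_square:
  fixes a :: "nat \<Rightarrow> real"
  assumes S: "finite S" "inj_on a S" and pos: "\<And>j. j \<in> S \<Longrightarrow> a j > 0" and n: "n \<in> S"
  shows "(\<Sum>m\<in>S. a m * pi_finite a S m / (a n + a m)^2) = 1 / (a n * pi_finite a S n)"
proof -
  define T where "T = (\<Sum>m\<in>S. a m * pi_finite a S m / (a n + a m)^2)"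
  have S': "finite (S - {n})" "inj_on a (S - {n})" using S by (auto simp: inj_on_diff)
  have notin: "- a n \<notin> a ` (S - {n})" using pos n by (intro uminus_notin_image_pos) auto
  have summand: "a m * pi_finite a (S - {n}) m / (- a n - a m)
      = a m * pi_finite a S m * (2 * a n / (a n + a m)^2 - 1 / (a n + a m))" if "m \<in> S - {n}" for m
  proof -
    have pos_sum: "a m + a n > 0" using pos n that by (simp add: add_pos_pos)
    then have remove: "pi_finite a (S - {n}) m = pi_finite a S m * (a m - a n) / (a m + a n)"
      using that by (intro pi_finite_remove[OF S n]) auto
    show ?thesis unfolding remove using pos_sum by (simp add: divide_simps power2_eq_square) (simp add: algebra_simps)
  qed
  have "cayley_prod a (S - {n}) (- a n) = 1 + (\<Sum>m\<in>S - {n}. a m * pi_finite a (S - {n}) m / (- a n - a m))"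
    by (rule cayley_prod_partial_fractions[OF S' notin])
  also have "\<dots> = 1 + (\<Sum>m\<in>S. a m * pi_finite a S m * (2 * a n / (a n + a m)^2 - 1 / (a n + a m)))"
    \<comment> \<open>the added summand at m = n vanishes\<close>
    using S n pos[OF n] by (simp add: summand sum.remove[of S n] power2_eq_square)
  also have "\<dots> = 2 * a n * T"
    using sum_pi_finite_div_add[OF S pos n]
    by (simp add: T_def right_diff_distrib sum_subtractf sum_distrib_left mult_ac)
  finally have "2 * a n * T * pi_finite a S n = 2"
    using cayley_prod_remove_mult_pi_finite[OF S pos n] by simp
  then have "T * (a n * pi_finite a S n) = 1" by (simp add: mult_ac)
  then show ?thesis unfolding T_def[symmetric] by (metis eq_divide_eq mult_zero_right zero_neq_one)
qed

lemma tannery_sums: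
  fixes u :: "nat \<Rightarrow> nat \<Rightarrow> real"
  assumes lim: "\<And>m. (\<lambda>N. u m N) \<longlonglongrightarrow> v m"
    and bound: "\<And>m N. \<bar>u m N\<bar> \<le> M m" and "summable M"
    and vanish: "\<And>m N. N < m \<Longrightarrow> u m N = 0"
    and partial: "(\<lambda>N. \<Sum>m\<le>N. u m N) \<longlonglongrightarrow> L"
  shows "v sums L"
proof -
  have "summable (\<lambda>m. norm (v m)) \<and> (\<lambda>N. \<Sum>m. u m N) \<longlonglongrightarrow> (\<Sum>m. v m)"
    using tannerys_theorem[OF lim _ \<open>summable M\<close>] bound by (simp add: always_eventually)
  moreover have "(\<Sum>m. u m N) = (\<Sum>m\<le>N. u m N)" for N
    by (rule suminf_finite) (use vanish in auto)
  ultimately have "summable v" "(\<Sum>m. v m) = L"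
    using partial summable_rabs_cancel LIMSEQ_unique by auto
  then show ?thesis by (simp add: sums_iff)
qed

lemma summable_on_sums_imp_has_sum:
  fixes f :: "nat \<Rightarrow> real"
  assumes "f summable_on UNIV" "f sums s"
  shows "(f has_sum s) UNIV"
proof -
  have "f sums infsum f UNIV" using assms(1) by (intro has_sum_imp_sums has_sum_infsum)
  with assms show ?thesis using sums_unique2 has_sum_infsum by metis
qed

lemma sums_iterated_swap:
  fixes f :: "nat \<Rightarrow> nat \<Rightarrow> real"
  assumes summable: "(\<lambda>(m, k). f m k) summable_on UNIV"
    and rows: "\<And>m. (\<lambda>k. f m k) sums r m"
    and cols: "\<And>k. (\<lambda>m. f m k) sums c k"
    and "c sums s"
  shows "r sums s"
proof -
  obtain S where S: "((\<lambda>(m, k). f m k) has_sum S) (UNIV \<times> UNIV)"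
    using summable by (auto simp: summable_on_def)
  have S': "((\<lambda>(k, m). f m k) has_sum S) (UNIV \<times> UNIV)"
    using S by (subst has_sum_swap) (simp add: case_prod_unfold)
  have "(r has_sum S) UNIV"
  proof (rule has_sum_SigmaD[OF S])
    fix m
    have "f m summable_on UNIV"
      using summable_on_SigmaD1[of "\<lambda>m k. f m k" UNIV "\<lambda>_. UNIV"] S by (auto dest: has_sum_imp_summable)
    then show "((\<lambda>k. (\<lambda>(m, k). f m k) (m, k)) has_sum r m) UNIV"
      using rows summable_on_sums_imp_has_sum by simp
  qed
  moreover have "(c has_sum S) UNIV"
  proof (rule has_sum_SigmaD[OF S'])
    fix k
    have "(\<lambda>m. f m k) summable_on UNIV"
      using summable_on_SigmaD1[of "\<lambda>k m. f m k" UNIV "\<lambda>_. UNIV"] S' by (auto dest: has_sum_imp_summable)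
    then show "((\<lambda>m. (\<lambda>(k, m). f m k) (k, m)) has_sum c k) UNIV"
      using cols summable_on_sums_imp_has_sum by simp
  qed
  ultimately show ?thesis
    using \<open>c sums s\<close> has_sum_imp_sums sums_unique2 by metis
qed

lemma summable_on_times:
  fixes f g :: "'a \<Rightarrow> real"
  assumes "f summable_on A" and "g summable_on B"
  shows "(\<lambda>(x, y). f x * g y) summable_on A \<times> B"
proof -
  have f: "(\<lambda>x. \<bar>f x\<bar>) summable_on A" and g: "(\<lambda>y. \<bar>g y\<bar>) summable_on B"
    using assms summable_on_iff_abs_summable_on_real by auto
  have "(\<lambda>p. norm ((\<lambda>(x, y). f x * g y) p)) summable_on Sigma A (\<lambda>_. B)"
  proof (subst Infinite_Sum.abs_summable_on_Sigma_iff, intro conjI ballI)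
    fix x
    show "(\<lambda>y. norm ((\<lambda>(x, y). f x * g y) (x, y))) summable_on B"
      using summable_on_cmult_right[OF g, of "\<bar>f x\<bar>"] by (simp add: abs_mult)
  next
    have "(\<lambda>x. \<bar>f x\<bar> * (\<Sum>\<^sub>\<infinity>y\<in>B. \<bar>g y\<bar>)) summable_on A"
      using summable_on_cmult_left[OF f] .
    then show "(\<lambda>x. norm (\<Sum>\<^sub>\<infinity>y\<in>B. norm ((\<lambda>(x, y). f x * g y) (x, y)))) summable_on A"
      by (simp add: abs_mult infsum_cmult_right' infsum_nonneg summable_on_iff_abs_summable_on_real[symmetric])
  qed
  then show ?thesis using summable_on_iff_abs_summable_on_real by auto
qed

definition nat_dist :: "nat \<Rightarrow> nat \<Rightarrow> nat" where
  "nat_dist i j = (if i \<le> j then j - i else i - j)"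

lemma summable_power_nat_dist:
  fixes \<mu> :: real
  assumes "0 \<le> \<mu>" "\<mu> < 1"
  shows "summable (\<lambda>j. \<mu> ^ nat_dist i j)"
proof -
  have "summable (\<lambda>j. \<mu> ^ nat_dist i (j + i))"
    using assms by (simp add: nat_dist_def)
  then show ?thesis by (rule summable_iff_shift[THEN iffD1])
qed

lemma power_nat_dist_mult_le:
  fixes \<mu> :: real
  assumes "0 \<le> \<mu>" "\<mu> \<le> 1"
  shows "\<mu> ^ nat_dist n m * \<mu> ^ nat_dist m k \<le> sqrt \<mu> ^ nat_dist n m * sqrt \<mu> ^ nat_dist n k"
proof -
  have "nat_dist n m + nat_dist n k \<le> 2 * (nat_dist n m + nat_dist m k)"
    by (simp add: nat_dist_def; arith)
  then have "sqrt \<mu> ^ (2 * (nat_dist n m + nat_dist m k)) \<le> sqrt \<mu> ^ (nat_dist n m + nat_dist n k)"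
    using assms by (intro power_decreasing) auto
  moreover have "\<mu> ^ d = sqrt \<mu> ^ (2 * d)" for d
    using assms by (simp add: power_mult)
  ultimately show ?thesis
    by (metis power_add distrib_left)
qed

definition P_entry :: "(nat \<Rightarrow> real) \<Rightarrow> nat \<Rightarrow> nat \<Rightarrow> real" where
  "P_entry a i j = a j * pi_seq a j / (a i + a j)"

lemma P_op_eq_suminf: "P_op a y i = (\<Sum>j. P_entry a i j * y j)"
  by (simp add: P_op_def P_entry_def)

locale cauchy_operator =
  fixes a b :: "nat \<Rightarrow> real" and B C \<mu> :: real
  assumes a_pos: "\<And>n. a n > 0"
    and a_inj: "inj a"
    and b_pos: "\<And>n. b n > 0"
    and b_bdd: "bdd_above (range b)"
    and pi_conv: "\<And>n. convergent_prod (pi_factor a n)"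
    and abs_pi_seq_le: "\<And>n. \<bar>pi_seq a n\<bar> \<le> B"
    and mu: "0 \<le> \<mu>" "\<mu> < 1"
    and phi_le: "\<And>i j. phi a b i j \<le> C * \<mu> ^ nat_dist i j"
begin

lemma abs_pi_factor_ge_1: "1 \<le> \<bar>pi_factor a m i\<bar>"
proof (cases "i = m")
  case False
  then have "0 < \<bar>a m - a i\<bar>" "\<bar>a m - a i\<bar> \<le> \<bar>a m + a i\<bar>"
    using a_inj a_pos[of m] a_pos[of i] by (auto dest: injD)
  then show ?thesis
    using False a_pos[of m] by (simp add: pi_factor_def divide_simps abs_divide)
qed (simp add: pi_factor_def)

lemma pi_finite_atMost:
  assumes "m \<le> N"
  shows "pi_finite a {..N} m = 2 * (\<Prod>i\<le>N. pi_factor a m i)"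
proof -
  have "(\<Prod>i\<le>N. pi_factor a m i) = pi_factor a m m * (\<Prod>i\<in>{..N} - {m}. pi_factor a m i)"
    using assms by (intro prod.remove) auto
  also have "\<dots> = (\<Prod>i\<in>{..N} - {m}. (a m + a i) / (a m - a i))"
    using a_pos[of m] by (auto simp: pi_factor_def divide_simps intro!: prod.cong)
  finally show ?thesis by (simp add: pi_finite_def)
qed

lemma pi_finite_atMost_LIMSEQ: "(\<lambda>N. pi_finite a {..N} m) \<longlonglongrightarrow> pi_seq a m"
proof -
  have "(\<lambda>N. 2 * (\<Prod>i\<le>N. pi_factor a m i)) \<longlonglongrightarrow> pi_seq a m"
    unfolding pi_seq_def by (intro tendsto_mult tendsto_const convergent_prod_LIMSEQ pi_conv)
  moreover have "\<forall>\<^sub>F N in sequentially. 2 * (\<Prod>i\<le>N. pi_factor a m i) = pi_finite a {..N} m"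
    using eventually_ge_at_top[of m] by eventually_elim (simp add: pi_finite_atMost)
  ultimately show ?thesis by (rule Lim_transform_eventually)
qed

lemma abs_pi_finite_atMost_le:
  assumes "m \<le> N"
  shows "\<bar>pi_finite a {..N} m\<bar> \<le> \<bar>pi_seq a m\<bar>"
proof -
  have "incseq (\<lambda>N. \<bar>2 * (\<Prod>i\<le>N. pi_factor a m i)\<bar>)"
  proof (rule incseq_SucI)
    fix N
    show "\<bar>2 * (\<Prod>i\<le>N. pi_factor a m i)\<bar> \<le> \<bar>2 * (\<Prod>i\<le>Suc N. pi_factor a m i)\<bar>"
      using mult_left_mono[OF abs_pi_factor_ge_1, of "\<bar>2 * (\<Prod>i\<le>N. pi_factor a m i)\<bar>" m "Suc N"]
      by (simp add: abs_mult atMost_Suc mult_ac)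
  qed
  moreover have "(\<lambda>N. \<bar>2 * (\<Prod>i\<le>N. pi_factor a m i)\<bar>) \<longlonglongrightarrow> \<bar>pi_seq a m\<bar>"
    unfolding pi_seq_def by (intro tendsto_rabs tendsto_mult tendsto_const convergent_prod_LIMSEQ pi_conv)
  ultimately have "\<bar>2 * (\<Prod>i\<le>N. pi_factor a m i)\<bar> \<le> \<bar>pi_seq a m\<bar>"
    by (rule incseq_le)
  with assms show ?thesis by (simp add: pi_finite_atMost)
qed

lemma pi_seq_nonzero: "pi_seq a m \<noteq> 0"
proof -
  have "pi_factor a m i \<noteq> 0" for i using abs_pi_factor_ge_1[of m i] by auto
  then show ?thesis by (simp add: pi_seq_def prodinf_nonzero pi_conv)
qed

lemma C_pos: "0 < C"
  using phi_le[of 0 0] a_pos[of 0] b_pos[of 0] by (simp add: phi_def nat_dist_def)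

lemma abs_P_entry_mult_le:
  "\<bar>P_entry a i j * x\<bar> \<le> B * C * \<mu> ^ nat_dist i j * \<bar>b j * x\<bar> / b i"
proof -
  have pos: "a i > 0" "a j > 0" "b i > 0" "b j > 0" using a_pos b_pos by auto
  have "a j / (a i + a j) = phi a b i j * b j / b i"
    using pos by (simp add: phi_def divide_simps)
  also have "\<dots> \<le> C * \<mu> ^ nat_dist i j * b j / b i"
    using phi_le[of i j] pos by (simp add: divide_right_mono)
  finally have ratio: "a j / (a i + a j) \<le> C * \<mu> ^ nat_dist i j * b j / b i" .
  have "\<bar>P_entry a i j * x\<bar> = \<bar>pi_seq a j\<bar> * (a j / (a i + a j)) * \<bar>x\<bar>"
    using pos by (simp add: P_entry_def abs_mult abs_divide)
  also have "\<dots> \<le> B * (C * \<mu> ^ nat_dist i j * b j / b i) * \<bar>x\<bar>"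
    using pos abs_pi_seq_le[of j] abs_pi_seq_le[of 0] ratio
    by (intro mult_right_mono mult_mono) auto
  also have "\<dots> = B * C * \<mu> ^ nat_dist i j * \<bar>b j * x\<bar> / b i"
    using pos by (simp add: abs_mult)
  finally show ?thesis .
qed

lemma summable_abs_P_entry_mult:
  assumes "\<And>j. \<bar>b j * y j\<bar> \<le> Z"
  shows "summable (\<lambda>j. \<bar>P_entry a i j * y j\<bar>)"
proof (rule summable_comparison_test')
  show "summable (\<lambda>j. B * C * Z / b i * \<mu> ^ nat_dist i j)"
    using mu by (intro summable_mult summable_power_nat_dist)
  fix j
  have "0 \<le> B * C * \<mu> ^ nat_dist i j / b i"
    using abs_pi_seq_le[of 0] C_pos mu b_pos[of i] by simp
  have "\<bar>P_entry a i j * y j\<bar> \<le> B * C * \<mu> ^ nat_dist i j / b i * \<bar>b j * y j\<bar>"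
    using abs_P_entry_mult_le[of i j "y j"] by (simp add: mult_ac)
  also have "\<dots> \<le> B * C * \<mu> ^ nat_dist i j / b i * Z"
    by (rule mult_left_mono[OF assms \<open>0 \<le> B * C * \<mu> ^ nat_dist i j / b i\<close>])
  finally show "norm \<bar>P_entry a i j * y j\<bar> \<le> B * C * Z / b i * \<mu> ^ nat_dist i j"
    by (simp add: mult_ac)
qed

lemma summable_abs_P_entry: "summable (\<lambda>j. \<bar>P_entry a i j\<bar>)"
proof -
  obtain Z where "\<And>j. b j \<le> Z" using b_bdd by (auto simp: bdd_above_def)
  then have "\<bar>b j * 1\<bar> \<le> Z" for j using b_pos[of j] by simp
  from summable_abs_P_entry_mult[OF this] show ?thesis by simp
qed

lemma P_op_sums:
  assumes "\<And>j. \<bar>b j * y j\<bar> \<le> Z"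
  shows "(\<lambda>j. P_entry a i j * y j) sums P_op a y i"
  using summable_rabs_cancel[OF summable_abs_P_entry_mult[OF assms]]
  by (simp add: P_op_eq_suminf summable_sums)

lemma sums_of_truncations:
  assumes "summable (\<lambda>m. \<bar>a m * pi_seq a m * w m\<bar>)"
    and "(\<lambda>N. \<Sum>m\<le>N. a m * pi_finite a {..N} m * w m) \<longlonglongrightarrow> L"
  shows "(\<lambda>m. a m * pi_seq a m * w m) sums L"
proof (rule tannery_sums[where u = "\<lambda>m N. if m \<le> N then a m * pi_finite a {..N} m * w m else 0"])
  fix m
  have "\<forall>\<^sub>F N in sequentially. a m * pi_finite a {..N} m * w m
      = (if m \<le> N then a m * pi_finite a {..N} m * w m else 0)"
    using eventually_ge_at_top[of m] by eventually_elim simp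
  then show "(\<lambda>N. if m \<le> N then a m * pi_finite a {..N} m * w m else 0)
      \<longlonglongrightarrow> a m * pi_seq a m * w m"
    by (rule Lim_transform_eventually[rotated]) (intro tendsto_intros pi_finite_atMost_LIMSEQ)
  fix N
  show "\<bar>if m \<le> N then a m * pi_finite a {..N} m * w m else 0\<bar> \<le> \<bar>a m * pi_seq a m * w m\<bar>"
    using abs_pi_finite_atMost_le[of m N] a_pos[of m]
    by (simp add: abs_mult mult_left_mono mult_right_mono)
next
  show "(\<lambda>N. \<Sum>m\<le>N. if m \<le> N then a m * pi_finite a {..N} m * w m else 0) \<longlonglongrightarrow> L"
    using assms(2) by simp
qed (use assms(1) in auto)

lemma P_entry_sums: "(\<lambda>j. P_entry a i j) sums 1"
proof -
  have "(\<lambda>j. a j * pi_seq a j * (1 / (a i + a j))) sums 1"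
  proof (rule sums_of_truncations)
    show "summable (\<lambda>j. \<bar>a j * pi_seq a j * (1 / (a i + a j))\<bar>)"
      using summable_abs_P_entry[of i] by (simp add: P_entry_def)
    have "\<forall>\<^sub>F N in sequentially. (\<Sum>j\<le>N. a j * pi_finite a {..N} j * (1 / (a i + a j))) = 1"
      using eventually_ge_at_top[of i]
      by eventually_elim (use a_pos a_inj in \<open>simp add: sum_pi_finite_div_add inj_on_subset\<close>)
    then show "(\<lambda>N. \<Sum>j\<le>N. a j * pi_finite a {..N} j * (1 / (a i + a j))) \<longlonglongrightarrow> 1"
      by (rule tendsto_eventually)
  qed
  then show ?thesis by (simp add: P_entry_def)
qed

lemma P_entry_div_sums: "(\<lambda>j. P_entry a i j / (a i + a j)) sums (1 / (a i * pi_seq a i))"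
proof -
  have "(\<lambda>j. a j * pi_seq a j * (1 / (a i + a j)^2)) sums (1 / (a i * pi_seq a i))"
  proof (rule sums_of_truncations)
    have "\<bar>a j * pi_seq a j * (1 / (a i + a j)^2)\<bar> \<le> \<bar>P_entry a i j\<bar> / a i" for j
      using a_pos[of i] a_pos[of j]
      by (simp add: P_entry_def abs_mult abs_divide power2_eq_square divide_simps mult_left_mono)
    then show "summable (\<lambda>j. \<bar>a j * pi_seq a j * (1 / (a i + a j)^2)\<bar>)"
      by (intro summable_comparison_test'[OF summable_divide[OF summable_abs_P_entry]]) auto
    have "(\<lambda>N. 1 / (a i * pi_finite a {..N} i)) \<longlonglongrightarrow> 1 / (a i * pi_seq a i)"
      using a_pos[of i] pi_seq_nonzero[of i] by (intro tendsto_intros pi_finite_atMost_LIMSEQ) auto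
    moreover have "\<forall>\<^sub>F N in sequentially.
        1 / (a i * pi_finite a {..N} i) = (\<Sum>j\<le>N. a j * pi_finite a {..N} j * (1 / (a i + a j)^2))"
      using eventually_ge_at_top[of i]
      by eventually_elim (use a_pos a_inj in \<open>simp add: sum_pi_finite_div_add_square inj_on_subset\<close>)
    ultimately show "(\<lambda>N. \<Sum>j\<le>N. a j * pi_finite a {..N} j * (1 / (a i + a j)^2))
        \<longlonglongrightarrow> 1 / (a i * pi_seq a i)"
      by (rule Lim_transform_eventually)
  qed
  then show ?thesis by (simp add: P_entry_def power2_eq_square)
qed

lemma P_entry_mult_sums: "(\<lambda>j. P_entry a i j * P_entry a j k) sums (if k = i then 1 else 0)"
proof (cases "k = i")
  case True
  have "(\<lambda>j. a i * pi_seq a i * (P_entry a i j / (a i + a j))) sums (a i * pi_seq a i * (1 / (a i * pi_seq a i)))"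
    by (intro sums_mult P_entry_div_sums)
  moreover have "a i * pi_seq a i * (1 / (a i * pi_seq a i)) = 1"
    using a_pos[of i] pi_seq_nonzero[of i] by simp
  ultimately show ?thesis
    using True by (simp add: P_entry_def add.commute mult_ac)
next
  case False
  then have "a k - a i \<noteq> 0" using a_inj by (auto dest: injD)
  then have "P_entry a i j * P_entry a j k = a k * pi_seq a k / (a k - a i) * (P_entry a i j - P_entry a k j)" for j
    using a_pos[of i] a_pos[of j] a_pos[of k]
    by (simp add: P_entry_def divide_simps) (simp add: algebra_simps)
  moreover have "(\<lambda>j. a k * pi_seq a k / (a k - a i) * (P_entry a i j - P_entry a k j))
      sums (a k * pi_seq a k / (a k - a i) * (1 - 1))"
    by (intro sums_mult sums_diff P_entry_sums)
  ultimately show ?thesis using False by simp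
qed

lemma abs_P_entry_P_entry_mult_le:
  "\<bar>P_entry a n m * (P_entry a m k * x)\<bar> \<le> (B * C)^2 / b n * (\<mu> ^ nat_dist n m * \<mu> ^ nat_dist m k) * \<bar>b k * x\<bar>"
proof -
  have "0 \<le> B * C * \<mu> ^ nat_dist n m / b n"
    using abs_pi_seq_le[of 0] C_pos mu b_pos[of n] by simp
  moreover have "\<bar>b m * (P_entry a m k * x)\<bar> \<le> B * C * \<mu> ^ nat_dist m k * \<bar>b k * x\<bar>"
    using abs_P_entry_mult_le[of m k x] b_pos[of m] by (simp add: abs_mult field_simps)
  ultimately have "B * C * \<mu> ^ nat_dist n m / b n * \<bar>b m * (P_entry a m k * x)\<bar>
      \<le> B * C * \<mu> ^ nat_dist n m / b n * (B * C * \<mu> ^ nat_dist m k * \<bar>b k * x\<bar>)"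
    by (rule mult_left_mono[rotated])
  then show ?thesis
    using abs_P_entry_mult_le[of n m "P_entry a m k * x"] by (simp add: power2_eq_square mult_ac)
qed

lemma P_entry_P_op_sums:
  assumes Z: "\<And>k. \<bar>b k * y k\<bar> \<le> Z"
  shows "(\<lambda>m. P_entry a n m * P_op a y m) sums y n"
proof (rule sums_iterated_swap)
  define K where "K = (B * C)^2 / b n * Z"
  have geometric: "(\<lambda>j. c * sqrt \<mu> ^ nat_dist n j) summable_on UNIV" for c
  proof (rule norm_summable_imp_summable_on)
    show "summable (\<lambda>j. norm (c * sqrt \<mu> ^ nat_dist n j))"
      using summable_mult[OF summable_power_nat_dist[where \<mu> = "sqrt \<mu>" and i = n], of "\<bar>c\<bar>"] mu
      by (simp add: abs_mult)
  qed
  have "(\<lambda>(m, k). K * sqrt \<mu> ^ nat_dist n m * sqrt \<mu> ^ nat_dist n k) summable_on UNIV"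
    using summable_on_times[OF geometric[of K] geometric[of 1]] by simp
  then have "(\<lambda>p. norm ((\<lambda>(m, k). P_entry a n m * (P_entry a m k * y k)) p)) summable_on UNIV"
  proof (rule Infinite_Sum.abs_summable_on_comparison_test')
    fix p :: "nat \<times> nat"
    obtain m k where p: "p = (m, k)" by fastforce
    have "\<bar>P_entry a n m * (P_entry a m k * y k)\<bar>
        \<le> (B * C)^2 / b n * (\<mu> ^ nat_dist n m * \<mu> ^ nat_dist m k) * \<bar>b k * y k\<bar>"
      by (rule abs_P_entry_P_entry_mult_le)
    also have "\<dots> \<le> (B * C)^2 / b n * (sqrt \<mu> ^ nat_dist n m * sqrt \<mu> ^ nat_dist n k) * Z"
      using b_pos[of n] mu Z[of k]
      by (intro mult_mono[OF mult_left_mono[OF power_nat_dist_mult_le]]) auto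
    finally show "norm ((\<lambda>(m, k). P_entry a n m * (P_entry a m k * y k)) p)
        \<le> (\<lambda>(m, k). K * sqrt \<mu> ^ nat_dist n m * sqrt \<mu> ^ nat_dist n k) p"
      by (simp add: p K_def mult_ac)
  qed
  then show "(\<lambda>(m, k). P_entry a n m * (P_entry a m k * y k)) summable_on UNIV"
    using summable_on_iff_abs_summable_on_real by blast
  show "(\<lambda>k. P_entry a n m * (P_entry a m k * y k)) sums (P_entry a n m * P_op a y m)" for m
    by (intro sums_mult P_op_sums[OF Z])
  show "(\<lambda>m. P_entry a n m * (P_entry a m k * y k)) sums ((if k = n then 1 else 0) * y k)" for k
    using sums_mult2[OF P_entry_mult_sums[of n k], of "y k"] by (simp add: mult.assoc)
  show "(\<lambda>k. (if k = n then 1 else 0) * y k) sums y n"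
  proof -
    have "(\<lambda>k. (if k = n then 1 else 0) * y k) = (\<lambda>k. if k = n then y k else 0)" by auto
    then show ?thesis using sums_single[of n y] by simp
  qed
qed

end

lemma in_seqspace_imp_Bseq:
  assumes "valid_seqspace X" "in_seqspace X x"
  shows "Bseq x"
proof (cases X)
  case (Lp p)
  with assms have p: "1 \<le> p" and summable: "summable (\<lambda>n. \<bar>x n\<bar> powr p)" by auto
  have "\<forall>\<^sub>F n in sequentially. \<bar>x n\<bar> powr p < 1"
    using order_tendstoD(2)[OF summable_LIMSEQ_zero[OF summable], of 1] by simp
  then have "\<forall>\<^sub>F n in sequentially. norm (x n) \<le> norm (1 :: real)"
  proof eventually_elim
    case (elim n)
    show ?case
    proof (rule ccontr)
      assume "\<not> ?case"
      then have "1 \<le> \<bar>x n\<bar> powr p" using p by (intro ge_one_powr_ge_zero) auto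
      with elim show False by simp
    qed
  qed
  then show ?thesis by (rule Bseq_eventually_mono) simp
qed (use assms convergent_imp_Bseq convergentI in auto)

theorem proposition5:
  fixes X :: seqspace and a b :: "nat \<Rightarrow> real"
  assumes X: "valid_seqspace X"
    and a_pos: "\<And>n. a n > 0"
    and a_dec: "\<And>n m. n < m \<Longrightarrow> a m < a n"
    and a_lim: "a \<longlonglongrightarrow> 0"
    and b_in: "in_seqspace X b"
    and b_pos: "\<And>n. b n > 0"
    and pi_conv: "\<And>n. convergent_prod (pi_factor a n)"
    and pi_bdd: "Bseq (pi_seq a)"
    and phi_bound: "\<exists>C \<mu>. C > 0 \<and> 0 < \<mu> \<and> \<mu> < 1 \<and>
        (\<forall>i j. phi a b i j \<le> C * \<mu> ^ (if i \<le> j then j - i else i - j))"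
  shows "\<forall>y. in_Y X b y \<longrightarrow>
           (\<forall>n. (\<lambda>m. a m * pi_seq a m * P_op a y m / (a n + a m)) sums y n)"
proof (intro allI impI)
  fix y n assume "in_Y X b y"
  then obtain Z where Z: "\<And>k. \<bar>b k * y k\<bar> \<le> Z"
    using in_seqspace_imp_Bseq[OF X] unfolding in_Y_def by (metis BseqE real_norm_def)
  obtain C \<mu> where "0 < \<mu>" "\<mu> < 1" "\<And>i j. phi a b i j \<le> C * \<mu> ^ nat_dist i j"
    using phi_bound unfolding nat_dist_def by blast
  moreover obtain B where "\<And>k. \<bar>pi_seq a k\<bar> \<le> B"
    using pi_bdd by (metis BseqE real_norm_def)
  moreover have "inj a"
    using a_dec by (metis injI less_irrefl nat_neq_iff)
  ultimately interpret cauchy_operator a b B C \<mu>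
    using a_pos b_pos pi_conv Bseq_bdd_above[OF in_seqspace_imp_Bseq[OF X b_in]]
    by unfold_locales auto
  show "(\<lambda>m. a m * pi_seq a m * P_op a y m / (a n + a m)) sums y n"
    using P_entry_P_op_sums[OF Z] by (simp add: P_entry_def)
qed

end
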